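(* Every model of an extensionally complete set of sentences is separating.
   Context: Setting: higher-order logic (Church's simple theory of types, without a description operator), with its standard Hilbert-style proof system (logical axioms for truth values, Leibniz' law, extensionality, $\beta$-reduction, and the rule of equality substitution) and Henkin semantics: an interpretation $I$ consists of domains $D_\alpha$ ($D_o=\{\mathsf T,\mathsf F\}$, $D_{\alpha\to\beta}$ a set of functions) and a valuation of the constants (equality denoting identity) such that every term has a denotation; $V(t,I)$ is the denotation of a closed term $t$. Sentences are closed terms of type $o$; a model of a set of sentences is an interpretation in which each is true. A set $S$ of sentences is extensionally complete if for every pair $r,s$ of closed terms of the same function type $\alpha\to\beta$ there is a closed term $t$ of type $\alpha$ such that $r\neq s\to(r\,t)\neq(s\,t)$ is derivable from $S$. An interpretation $I$ is separating if for every pair $r,s$ of closed terms of the same function type $\alpha\to\beta$ with $V(r,I)\neq V(s,I)$ there is a closed term $t$ of type $\alpha$ (over the given alphabet) with $V((r\,t),I)\neq V((s\,t),I)$. *)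

theory Defs
  imports Main
begin

section \<open>Syntax of Church's simple type theory (Andrews' Q0 without description)\<close>

datatype ty = Tyo | Base nat | Fun ty ty

(* variables and constants are identified by a name together with a type;
   Q T is the equality constant of type T \<rightarrow> T \<rightarrow> o *)
datatype tm = Var string ty | Con string ty | Q ty | App tm tm | Lam string ty tm

fun type_of :: "tm \<Rightarrow> ty option" where
  "type_of (Var x T) = Some T"
| "type_of (Con c T) = Some T"
| "type_of (Q T) = Some (Fun T (Fun T Tyo))"
| "type_of (App s t) =
     (case type_of s of
        Some (Fun A B) \<Rightarrow> (if type_of t = Some A then Some B else None)
      | _ \<Rightarrow> None)"
| "type_of (Lam x T b) = map_option (Fun T) (type_of b)"

fun frees :: "tm \<Rightarrow> (string \<times> ty) set" where
  "frees (Var x T) = {(x, T)}"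
| "frees (Con c T) = {}"
| "frees (Q T) = {}"
| "frees (App s t) = frees s \<union> frees t"
| "frees (Lam x T b) = frees b - {(x, T)}"

fun consts_of :: "tm \<Rightarrow> (string \<times> ty) set" where
  "consts_of (Var x T) = {}"
| "consts_of (Con c T) = {(c, T)}"
| "consts_of (Q T) = {}"
| "consts_of (App s t) = consts_of s \<union> consts_of t"
| "consts_of (Lam x T b) = consts_of b"

text \<open>The alphabet \<Sigma> is a set of typed (non-logical) constants; the equality
  constants Q are logical and always available.\<close>

definition wff :: "(string \<times> ty) set \<Rightarrow> tm \<Rightarrow> ty \<Rightarrow> bool" where
  "wff \<Sigma> t A \<longleftrightarrow> type_of t = Some A \<and> consts_of t \<subseteq> \<Sigma>"

definition closed :: "tm \<Rightarrow> bool" where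
  "closed t \<longleftrightarrow> frees t = {}"

definition closed_term :: "(string \<times> ty) set \<Rightarrow> tm \<Rightarrow> ty \<Rightarrow> bool" where
  "closed_term \<Sigma> t A \<longleftrightarrow> wff \<Sigma> t A \<and> closed t"

definition sentence :: "(string \<times> ty) set \<Rightarrow> tm \<Rightarrow> bool" where
  "sentence \<Sigma> t \<longleftrightarrow> closed_term \<Sigma> t Tyo"

section \<open>Abbreviations of the logical connectives (Andrews)\<close>

definition eqt :: "ty \<Rightarrow> tm \<Rightarrow> tm \<Rightarrow> tm" where
  "eqt T a b = App (App (Q T) a) b"

definition Tr :: tm where
  "Tr = eqt (Fun Tyo (Fun Tyo Tyo)) (Q Tyo) (Q Tyo)"

definition Fa :: tm where
  "Fa = eqt (Fun Tyo Tyo) (Lam ''x'' Tyo Tr) (Lam ''x'' Tyo (Var ''x'' Tyo))"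

definition All :: "string \<Rightarrow> ty \<Rightarrow> tm \<Rightarrow> tm" where
  "All x T a = eqt (Fun T Tyo) (Lam x T Tr) (Lam x T a)"

definition andC :: tm where
  "andC = Lam ''x'' Tyo (Lam ''y'' Tyo
     (eqt (Fun (Fun Tyo (Fun Tyo Tyo)) Tyo)
        (Lam ''g'' (Fun Tyo (Fun Tyo Tyo)) (App (App (Var ''g'' (Fun Tyo (Fun Tyo Tyo))) Tr) Tr))
        (Lam ''g'' (Fun Tyo (Fun Tyo Tyo)) (App (App (Var ''g'' (Fun Tyo (Fun Tyo Tyo))) (Var ''x'' Tyo)) (Var ''y'' Tyo)))))"

definition conj :: "tm \<Rightarrow> tm \<Rightarrow> tm" where
  "conj a b = App (App andC a) b"

definition impC :: tm where
  "impC = Lam ''x'' Tyo (Lam ''y'' Tyo (eqt Tyo (Var ''x'' Tyo) (conj (Var ''x'' Tyo) (Var ''y'' Tyo))))"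

definition imp :: "tm \<Rightarrow> tm \<Rightarrow> tm" where
  "imp a b = App (App impC a) b"

definition neg :: "tm \<Rightarrow> tm" where
  "neg a = App (App (Q Tyo) Fa) a"

definition neq :: "ty \<Rightarrow> tm \<Rightarrow> tm \<Rightarrow> tm" where
  "neq T a b = neg (eqt T a b)"

section \<open>Proof system: axioms 1--4 of Q0 and rule R, with hypotheses\<close>

text \<open>One-occurrence replacement: repl a b c c' iff c' arises from c by
  replacing one occurrence of a by b (the variable after a lambda is not a subterm).\<close>

inductive repl :: "tm \<Rightarrow> tm \<Rightarrow> tm \<Rightarrow> tm \<Rightarrow> bool" where
  here: "repl a b a b"
| appL: "repl a b s s' \<Longrightarrow> repl a b (App s t) (App s' t)"
| appR: "repl a b t t' \<Longrightarrow> repl a b (App s t) (App s t')"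
| lam:  "repl a b s s' \<Longrightarrow> repl a b (Lam x T s) (Lam x T s')"

inductive derivable :: "(string \<times> ty) set \<Rightarrow> tm set \<Rightarrow> tm \<Rightarrow> bool" for \<Sigma> S where
  hyp: "a \<in> S \<Longrightarrow> derivable \<Sigma> S a"
| ax1: "derivable \<Sigma> S
     (eqt Tyo (conj (App (Var ''g'' (Fun Tyo Tyo)) Tr) (App (Var ''g'' (Fun Tyo Tyo)) Fa))
            (All ''x'' Tyo (App (Var ''g'' (Fun Tyo Tyo)) (Var ''x'' Tyo))))"
| ax2: "derivable \<Sigma> S
     (imp (eqt A (Var ''x'' A) (Var ''y'' A))
          (eqt Tyo (App (Var ''h'' (Fun A Tyo)) (Var ''x'' A)) (App (Var ''h'' (Fun A Tyo)) (Var ''y'' A))))"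
| ax3: "derivable \<Sigma> S
     (eqt Tyo (eqt (Fun B A) (Var ''f'' (Fun B A)) (Var ''g'' (Fun B A)))
            (All ''x'' B (eqt A (App (Var ''f'' (Fun B A)) (Var ''x'' B))
                                (App (Var ''g'' (Fun B A)) (Var ''x'' B)))))"
| ax4_1: "\<lbrakk> wff \<Sigma> a A; wff \<Sigma> y B;
            (\<exists>z. y = Var z B \<and> (z, B) \<noteq> (x, A)) \<or> (\<exists>c. y = Con c B) \<or> (\<exists>C. y = Q C) \<rbrakk>
          \<Longrightarrow> derivable \<Sigma> S (eqt B (App (Lam x A y) a) y)"
| ax4_2: "wff \<Sigma> a A \<Longrightarrow> derivable \<Sigma> S (eqt A (App (Lam x A (Var x A)) a) a)"
| ax4_3: "\<lbrakk> wff \<Sigma> a A; wff \<Sigma> b (Fun C D); wff \<Sigma> c C \<rbrakk> \<Longrightarrow> derivable \<Sigma> S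
            (eqt D (App (Lam x A (App b c)) a) (App (App (Lam x A b) a) (App (Lam x A c) a)))"
| ax4_4: "\<lbrakk> wff \<Sigma> a A; wff \<Sigma> b D; (y, C) \<noteq> (x, A); (y, C) \<notin> frees a \<rbrakk> \<Longrightarrow> derivable \<Sigma> S
            (eqt (Fun C D) (App (Lam x A (Lam y C b)) a) (Lam y C (App (Lam x A b) a)))"
| ax4_5: "\<lbrakk> wff \<Sigma> a A; wff \<Sigma> b D \<rbrakk> \<Longrightarrow> derivable \<Sigma> S
            (eqt (Fun A D) (App (Lam x A (Lam x A b)) a) (Lam x A b))"
| ruleR: "\<lbrakk> derivable \<Sigma> S c; derivable \<Sigma> S (eqt A a b); repl a b c c' \<rbrakk>
          \<Longrightarrow> derivable \<Sigma> S c'"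

definition ext_complete :: "(string \<times> ty) set \<Rightarrow> tm set \<Rightarrow> bool" where
  "ext_complete \<Sigma> S \<longleftrightarrow>
     (\<forall>A B r s. closed_term \<Sigma> r (Fun A B) \<and> closed_term \<Sigma> s (Fun A B) \<longrightarrow>
        (\<exists>t. closed_term \<Sigma> t A \<and>
             derivable \<Sigma> S (imp (neq (Fun A B) r s) (neq B (App r t) (App s t)))))"

text \<open>Domains are subsets of a universe 'u; a function domain D(A\<rightarrow>B) is represented
  extensionally via an application operation (so its elements are functions D A \<rightarrow> D B).\<close>

record 'u interp =
  dom :: "ty \<Rightarrow> 'u set"
  app :: "'u \<Rightarrow> 'u \<Rightarrow> 'u"
  tt :: 'u
  ff :: 'u
  cval :: "string \<times> ty \<Rightarrow> 'u"
  eqval :: "ty \<Rightarrow> 'u"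

fun val :: "'u interp \<Rightarrow> (string \<times> ty \<Rightarrow> 'u) \<Rightarrow> tm \<Rightarrow> 'u" where
  "val I \<phi> (Var x T) = \<phi> (x, T)"
| "val I \<phi> (Con c T) = cval I (c, T)"
| "val I \<phi> (Q T) = eqval I T"
| "val I \<phi> (App s t) = app I (val I \<phi> s) (val I \<phi> t)"
| "val I \<phi> (Lam x T b) =
     (SOME f. f \<in> dom I (Fun T (the (type_of b))) \<and>
              (\<forall>d\<in>dom I T. app I f d = val I (\<phi>((x, T) := d)) b))"

definition asg_ok :: "'u interp \<Rightarrow> (string \<times> ty \<Rightarrow> 'u) \<Rightarrow> bool" where
  "asg_ok I \<phi> \<longleftrightarrow> (\<forall>x T. \<phi> (x, T) \<in> dom I T)"

definition henkin_interp :: "(string \<times> ty) set \<Rightarrow> 'u interp \<Rightarrow> bool" where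
  "henkin_interp \<Sigma> I \<longleftrightarrow>
     (\<forall>T. dom I T \<noteq> {}) \<and>
     dom I Tyo = {tt I, ff I} \<and> tt I \<noteq> ff I \<and>
     (\<forall>A B f d. f \<in> dom I (Fun A B) \<and> d \<in> dom I A \<longrightarrow> app I f d \<in> dom I B) \<and>
     (\<forall>A B f g. f \<in> dom I (Fun A B) \<and> g \<in> dom I (Fun A B) \<and>
                (\<forall>d\<in>dom I A. app I f d = app I g d) \<longrightarrow> f = g) \<and>
     (\<forall>c T. (c, T) \<in> \<Sigma> \<longrightarrow> cval I (c, T) \<in> dom I T) \<and>
     (\<forall>T. eqval I T \<in> dom I (Fun T (Fun T Tyo)) \<and>
          (\<forall>x\<in>dom I T. \<forall>y\<in>dom I T.
              app I (app I (eqval I T) x) y = (if x = y then tt I else ff I))) \<and>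
     (\<forall>\<phi> x T b B. asg_ok I \<phi> \<and> wff \<Sigma> (Lam x T b) (Fun T B) \<longrightarrow>
        (\<exists>f\<in>dom I (Fun T B). \<forall>d\<in>dom I T. app I f d = val I (\<phi>((x, T) := d)) b))"

text \<open>Denotation of a closed term (independent of the assignment).\<close>

definition V :: "tm \<Rightarrow> 'u interp \<Rightarrow> 'u" where
  "V t I = val I (\<lambda>(x, T). SOME d. d \<in> dom I T) t"

definition is_model :: "(string \<times> ty) set \<Rightarrow> 'u interp \<Rightarrow> tm set \<Rightarrow> bool" where
  "is_model \<Sigma> I S \<longleftrightarrow> henkin_interp \<Sigma> I \<and> (\<forall>a\<in>S. V a I = tt I)"

definition separating :: "(string \<times> ty) set \<Rightarrow> 'u interp \<Rightarrow> bool" where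
  "separating \<Sigma> I \<longleftrightarrow>
     (\<forall>A B r s. closed_term \<Sigma> r (Fun A B) \<and> closed_term \<Sigma> s (Fun A B) \<and> V r I \<noteq> V s I \<longrightarrow>
        (\<exists>t. closed_term \<Sigma> t A \<and> V (App r t) I \<noteq> V (App s t) I))"

end

theory Submission
  imports Defs
begin

text \<open>The proof system is sound for Henkin semantics: every theorem derivable from a set of
  sentences is true under every assignment of every Henkin model of that set. Now let \<open>r\<close> and
  \<open>s\<close> be closed terms with different denotations in a model of an extensionally complete set
  \<open>S\<close>. Extensional completeness provides a closed \<open>t\<close> with
  \<open>r \<noteq> s \<longrightarrow> r t \<noteq> s t\<close> derivable from \<open>S\<close>, hence true in the model; its antecedent is
  true, so \<open>r t\<close> and \<open>s t\<close> have different denotations.\<close>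

(* The Lam equation unfolds to a choice term; lambdas are evaluated through app_val_Lam instead. *)
declare val.simps(5) [simp del]

lemma asg_ok_upd: "asg_ok I \<phi> \<Longrightarrow> d \<in> dom I T \<Longrightarrow> asg_ok I (\<phi>((x, T) := d))"
  by (auto simp: asg_ok_def)

lemma val_cong: "(\<forall>v\<in>frees t. \<phi> v = \<psi> v) \<Longrightarrow> val I \<phi> t = val I \<psi> t"
proof (induction t arbitrary: \<phi> \<psi>)
  case (Lam x T b)
  have "val I (\<phi>((x, T) := d)) b = val I (\<psi>((x, T) := d)) b" for d
    using Lam by (intro Lam.IH) auto
  then show ?case by (simp add: val.simps(5))
next
  case (App s t)
  then show ?case by (auto intro!: arg_cong2[where f = "app I"] App.IH)
qed auto

lemma wff_eqt: "wff \<Sigma> (eqt T a b) B \<longleftrightarrow> wff \<Sigma> a T \<and> wff \<Sigma> b T \<and> B = Tyo"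
  by (auto simp: wff_def eqt_def split: option.splits ty.splits if_splits)

lemma wff_Tr: "wff \<Sigma> Tr Tyo"
  by (simp add: wff_def Tr_def eqt_def)

lemma wff_Fa: "wff \<Sigma> Fa Tyo"
  by (simp add: wff_def Fa_def Tr_def eqt_def)

lemma wff_andC: "wff \<Sigma> andC (Fun Tyo (Fun Tyo Tyo))"
  by (simp add: wff_def andC_def Tr_def eqt_def)

lemma wff_conj: "wff \<Sigma> a Tyo \<Longrightarrow> wff \<Sigma> b Tyo \<Longrightarrow> wff \<Sigma> (conj a b) Tyo"
  using wff_andC[of \<Sigma>] by (simp add: wff_def conj_def)

lemma wff_impC: "wff \<Sigma> impC (Fun Tyo (Fun Tyo Tyo))"
  using wff_andC[of \<Sigma>] by (simp add: wff_def impC_def conj_def eqt_def)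

lemma wff_imp: "wff \<Sigma> a Tyo \<Longrightarrow> wff \<Sigma> b Tyo \<Longrightarrow> wff \<Sigma> (imp a b) Tyo"
  using wff_impC[of \<Sigma>] by (simp add: wff_def imp_def)

lemma wff_neg: "wff \<Sigma> a Tyo \<Longrightarrow> wff \<Sigma> (neg a) Tyo"
  using wff_Fa[of \<Sigma>] by (simp add: wff_def neg_def)

lemma wff_neq: "wff \<Sigma> a T \<Longrightarrow> wff \<Sigma> b T \<Longrightarrow> wff \<Sigma> (neq T a b) Tyo"
  by (simp add: neq_def wff_neg wff_eqt)

lemma wff_All: "wff \<Sigma> a Tyo \<Longrightarrow> wff \<Sigma> (All x T a) Tyo"
  using wff_Tr[of \<Sigma>] by (simp add: wff_def All_def eqt_def)

lemma repl_type: "repl a b c c' \<Longrightarrow> type_of a = type_of b \<Longrightarrow> type_of c' = type_of c"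
  by (induction rule: repl.induct) (simp_all only: type_of.simps)

lemma repl_consts: "repl a b c c' \<Longrightarrow> consts_of c' \<subseteq> consts_of c \<union> consts_of b"
  by (induction rule: repl.induct) auto

subsection \<open>Denotations in a Henkin interpretation\<close>

locale henkin =
  fixes \<Sigma> :: "(string \<times> ty) set" and I :: "'u interp"
  assumes interp: "henkin_interp \<Sigma> I"
begin

lemma dom_Tyo: "dom I Tyo = {tt I, ff I}"
  and tt_neq_ff: "tt I \<noteq> ff I"
  using interp by (auto simp: henkin_interp_def)

lemma app_in_dom: "f \<in> dom I (Fun A B) \<Longrightarrow> d \<in> dom I A \<Longrightarrow> app I f d \<in> dom I B"
  using interp by (auto simp: henkin_interp_def)

lemma fun_eq_iff_app: "f \<in> dom I (Fun A B) \<Longrightarrow> g \<in> dom I (Fun A B) \<Longrightarrow>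
    f = g \<longleftrightarrow> (\<forall>d\<in>dom I A. app I f d = app I g d)"
  using interp unfolding henkin_interp_def by blast

lemma eqval_in_dom: "eqval I T \<in> dom I (Fun T (Fun T Tyo))"
  using interp by (auto simp: henkin_interp_def)

lemma app_eqval: "x \<in> dom I T \<Longrightarrow> y \<in> dom I T \<Longrightarrow>
    app I (app I (eqval I T) x) y = (if x = y then tt I else ff I)"
  using interp unfolding henkin_interp_def by blast

lemma asg_ok_default: "asg_ok I (\<lambda>(x, T). SOME d. d \<in> dom I T)"
  using interp by (auto simp: asg_ok_def henkin_interp_def some_in_eq)

lemma val_Lam:
  assumes "wff \<Sigma> (Lam x T b) (Fun T B)" "asg_ok I \<phi>"
  shows "val I \<phi> (Lam x T b) \<in> dom I (Fun T B) \<and>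
    (\<forall>d\<in>dom I T. app I (val I \<phi> (Lam x T b)) d = val I (\<phi>((x, T) := d)) b)"
proof -
  have "type_of b = Some B"
    using assms(1) by (auto simp: wff_def)
  moreover have "\<exists>f\<in>dom I (Fun T B). \<forall>d\<in>dom I T. app I f d = val I (\<phi>((x, T) := d)) b"
    using interp assms unfolding henkin_interp_def by blast
  ultimately show ?thesis
    using someI_ex by (simp add: val.simps(5) Bex_def)
qed

lemma app_val_Lam: "wff \<Sigma> (Lam x T b) (Fun T B) \<Longrightarrow> asg_ok I \<phi> \<Longrightarrow> d \<in> dom I T \<Longrightarrow>
    app I (val I \<phi> (Lam x T b)) d = val I (\<phi>((x, T) := d)) b"
  using val_Lam by blast

lemma val_in_dom: "wff \<Sigma> t T \<Longrightarrow> asg_ok I \<phi> \<Longrightarrow> val I \<phi> t \<in> dom I T"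
proof (induction t arbitrary: T \<phi>)
  case (Con c T')
  then show ?case using interp by (auto simp: wff_def henkin_interp_def)
next
  case (Q T')
  then show ?case using eqval_in_dom by (auto simp: wff_def)
next
  case (App s t)
  then obtain A where "wff \<Sigma> s (Fun A T)" "wff \<Sigma> t A"
    by (auto simp: wff_def split: option.splits ty.splits if_splits)
  then show ?case using app_in_dom[OF App.IH(1) App.IH(2)] App.prems by auto
next
  case (Lam x T' b)
  then obtain B where "T = Fun T' B" by (auto simp: wff_def)
  then show ?case using Lam val_Lam by blast
qed (auto simp: wff_def asg_ok_def)

lemma val_eqt: "wff \<Sigma> a T \<Longrightarrow> wff \<Sigma> b T \<Longrightarrow> asg_ok I \<phi> \<Longrightarrow>
    val I \<phi> (eqt T a b) = (if val I \<phi> a = val I \<phi> b then tt I else ff I)"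
  unfolding eqt_def using app_eqval val_in_dom by simp

lemma val_Tr: "asg_ok I \<phi> \<Longrightarrow> val I \<phi> Tr = tt I"
  unfolding Tr_def by (subst val_eqt) (auto simp: wff_def)

lemma val_Fa:
  assumes \<phi>: "asg_ok I \<phi>"
  shows "val I \<phi> Fa = ff I"
proof -
  let ?K = "Lam ''x'' Tyo Tr" and ?Id = "Lam ''x'' Tyo (Var ''x'' Tyo)"
  have wK: "wff \<Sigma> ?K (Fun Tyo Tyo)" and wId: "wff \<Sigma> ?Id (Fun Tyo Tyo)"
    using wff_Tr[of \<Sigma>] by (simp_all add: wff_def)
  have ff: "ff I \<in> dom I Tyo"
    using dom_Tyo by simp
  have "app I (val I \<phi> ?K) (ff I) = tt I" "app I (val I \<phi> ?Id) (ff I) = ff I"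
    using app_val_Lam[OF wK \<phi> ff] app_val_Lam[OF wId \<phi> ff] val_Tr asg_ok_upd[OF \<phi> ff] by simp_all
  then have "val I \<phi> ?K \<noteq> val I \<phi> ?Id"
    using tt_neq_ff by auto
  then show ?thesis
    unfolding Fa_def using val_eqt[OF wK wId \<phi>] by simp
qed

lemma val_All:
  assumes a: "wff \<Sigma> a Tyo" and \<phi>: "asg_ok I \<phi>"
  shows "val I \<phi> (All x T a) =
    (if \<forall>d\<in>dom I T. val I (\<phi>((x, T) := d)) a = tt I then tt I else ff I)"
proof -
  have wK: "wff \<Sigma> (Lam x T Tr) (Fun T Tyo)" and wa: "wff \<Sigma> (Lam x T a) (Fun T Tyo)"
    using wff_Tr[of \<Sigma>] a by (simp_all add: wff_def)
  have "val I \<phi> (Lam x T Tr) = val I \<phi> (Lam x T a) \<longleftrightarrow>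
      (\<forall>d\<in>dom I T. val I (\<phi>((x, T) := d)) a = tt I)"
    using fun_eq_iff_app[OF val_in_dom[OF wK \<phi>] val_in_dom[OF wa \<phi>]]
      app_val_Lam[OF wK \<phi>] app_val_Lam[OF wa \<phi>] val_Tr asg_ok_upd[OF \<phi>]
    by (metis (no_types, lifting))
  then show ?thesis
    unfolding All_def using val_eqt[OF wK wa \<phi>] by simp
qed

text \<open>Conjunction is defined by \<open>(\<lambda>g. g T T) = (\<lambda>g. g x y)\<close>; the two projections
  \<open>\<lambda>x y. x\<close> and \<open>\<lambda>x y. y\<close> of the Boolean domain recover both conjuncts from this equation.\<close>

lemma Tyo_projections:
  assumes \<phi>: "asg_ok I \<phi>"
  obtains P1 P2 where "P1 \<in> dom I (Fun Tyo (Fun Tyo Tyo))" "P2 \<in> dom I (Fun Tyo (Fun Tyo Tyo))"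
    "\<forall>d\<in>dom I Tyo. \<forall>e\<in>dom I Tyo. app I (app I P1 d) e = d \<and> app I (app I P2 d) e = e"
proof
  let ?P1 = "Lam ''x'' Tyo (Lam ''y'' Tyo (Var ''x'' Tyo))"
  let ?P2 = "Lam ''x'' Tyo (Lam ''y'' Tyo (Var ''y'' Tyo))"
  have w: "wff \<Sigma> ?P1 (Fun Tyo (Fun Tyo Tyo))" "wff \<Sigma> ?P2 (Fun Tyo (Fun Tyo Tyo))"
    "wff \<Sigma> (Lam ''y'' Tyo (Var ''x'' Tyo)) (Fun Tyo Tyo)"
    "wff \<Sigma> (Lam ''y'' Tyo (Var ''y'' Tyo)) (Fun Tyo Tyo)"
    by (auto simp: wff_def)
  show "val I \<phi> ?P1 \<in> dom I (Fun Tyo (Fun Tyo Tyo))" "val I \<phi> ?P2 \<in> dom I (Fun Tyo (Fun Tyo Tyo))"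
    using val_in_dom[OF w(1) \<phi>] val_in_dom[OF w(2) \<phi>] .
  show "\<forall>d\<in>dom I Tyo. \<forall>e\<in>dom I Tyo.
      app I (app I (val I \<phi> ?P1) d) e = d \<and> app I (app I (val I \<phi> ?P2) d) e = e"
  proof (intro ballI conjI)
    fix d e assume d: "d \<in> dom I Tyo" and e: "e \<in> dom I Tyo"
    have \<phi>d: "asg_ok I (\<phi>((''x'', Tyo) := d))"
      using asg_ok_upd[OF \<phi> d] .
    show "app I (app I (val I \<phi> ?P1) d) e = d" "app I (app I (val I \<phi> ?P2) d) e = e"
      using app_val_Lam[OF w(1) \<phi> d] app_val_Lam[OF w(3) \<phi>d e]
        app_val_Lam[OF w(2) \<phi> d] app_val_Lam[OF w(4) \<phi>d e] by simp_all
  qed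
qed

lemma val_conj:
  assumes a: "wff \<Sigma> a Tyo" and b: "wff \<Sigma> b Tyo" and \<phi>: "asg_ok I \<phi>"
  shows "val I \<phi> (conj a b) = (if val I \<phi> a = tt I \<and> val I \<phi> b = tt I then tt I else ff I)"
proof -
  define G where "G = Fun Tyo (Fun Tyo Tyo)"
  let ?g = "Var ''g'' G"
  define L1 where "L1 = Lam ''g'' G (App (App ?g Tr) Tr)"
  define L2 where "L2 = Lam ''g'' G (App (App ?g (Var ''x'' Tyo)) (Var ''y'' Tyo))"
  define E where "E = eqt (Fun G Tyo) L1 L2"
  have andC: "andC = Lam ''x'' Tyo (Lam ''y'' Tyo E)"
    unfolding andC_def E_def L1_def L2_def G_def ..
  have wL: "wff \<Sigma> L1 (Fun G Tyo)" "wff \<Sigma> L2 (Fun G Tyo)"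
    by (auto simp: wff_def L1_def L2_def G_def Tr_def eqt_def)
  have wE: "wff \<Sigma> (Lam ''x'' Tyo (Lam ''y'' Tyo E)) (Fun Tyo (Fun Tyo Tyo))"
    "wff \<Sigma> (Lam ''y'' Tyo E) (Fun Tyo Tyo)"
    using wff_andC[of \<Sigma>] by (auto simp: andC wff_def)
  define va vb where "va = val I \<phi> a" and "vb = val I \<phi> b"
  have va: "va \<in> dom I Tyo" and vb: "vb \<in> dom I Tyo"
    using val_in_dom[OF a \<phi>] val_in_dom[OF b \<phi>] by (simp_all add: va_def vb_def)
  define \<phi>' where "\<phi>' = \<phi>((''x'', Tyo) := va, (''y'', Tyo) := vb)"
  have \<phi>x: "asg_ok I (\<phi>((''x'', Tyo) := va))" and \<phi>': "asg_ok I \<phi>'"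
    using asg_ok_upd[OF \<phi> va] asg_ok_upd[OF asg_ok_upd[OF \<phi> va] vb] by (simp_all add: \<phi>'_def)
  have "val I \<phi> (conj a b) = val I \<phi>' E"
    unfolding conj_def using app_val_Lam[OF wE(1) \<phi> va] app_val_Lam[OF wE(2) \<phi>x vb]
    by (simp add: andC va_def vb_def \<phi>'_def)
  also have "\<dots> = (if val I \<phi>' L1 = val I \<phi>' L2 then tt I else ff I)"
    unfolding E_def using val_eqt[OF wL \<phi>'] .
  also have "val I \<phi>' L1 = val I \<phi>' L2 \<longleftrightarrow>
      (\<forall>g\<in>dom I G. app I (app I g (tt I)) (tt I) = app I (app I g va) vb)"
  proof -
    have "app I (val I \<phi>' L1) g = app I (app I g (tt I)) (tt I)"
      and "app I (val I \<phi>' L2) g = app I (app I g va) vb" if g: "g \<in> dom I G" for g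
      using app_val_Lam[OF wL(1)[unfolded L1_def] \<phi>' g] val_Tr[OF asg_ok_upd[OF \<phi>' g]]
        app_val_Lam[OF wL(2)[unfolded L2_def] \<phi>' g]
      by (simp_all add: L1_def L2_def \<phi>'_def)
    then show ?thesis
      using fun_eq_iff_app[OF val_in_dom[OF wL(1) \<phi>'] val_in_dom[OF wL(2) \<phi>']] by auto
  qed
  also have "(\<forall>g\<in>dom I G. app I (app I g (tt I)) (tt I) = app I (app I g va) vb) \<longleftrightarrow>
      va = tt I \<and> vb = tt I"
  proof
    assume "\<forall>g\<in>dom I G. app I (app I g (tt I)) (tt I) = app I (app I g va) vb"
    moreover obtain P1 P2 where "P1 \<in> dom I G" "P2 \<in> dom I G"
      "\<forall>d\<in>dom I Tyo. \<forall>e\<in>dom I Tyo. app I (app I P1 d) e = d \<and> app I (app I P2 d) e = e"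
      using Tyo_projections[OF \<phi>] unfolding G_def by blast
    ultimately show "va = tt I \<and> vb = tt I"
      using dom_Tyo va vb by (metis insertI1)
  qed simp
  finally show ?thesis
    by (simp add: va_def vb_def)
qed

lemma val_imp:
  assumes a: "wff \<Sigma> a Tyo" and b: "wff \<Sigma> b Tyo" and \<phi>: "asg_ok I \<phi>"
  shows "val I \<phi> (imp a b) = (if val I \<phi> a = tt I \<longrightarrow> val I \<phi> b = tt I then tt I else ff I)"
proof -
  define va vb where "va = val I \<phi> a" and "vb = val I \<phi> b"
  have va: "va \<in> dom I Tyo" and vb: "vb \<in> dom I Tyo"
    using val_in_dom[OF a \<phi>] val_in_dom[OF b \<phi>] by (simp_all add: va_def vb_def)
  define \<phi>' where "\<phi>' = \<phi>((''x'', Tyo) := va, (''y'', Tyo) := vb)"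
  have \<phi>x: "asg_ok I (\<phi>((''x'', Tyo) := va))" and \<phi>': "asg_ok I \<phi>'"
    using asg_ok_upd[OF \<phi> va] asg_ok_upd[OF asg_ok_upd[OF \<phi> va] vb] by (simp_all add: \<phi>'_def)
  define E where "E = eqt Tyo (Var ''x'' Tyo) (conj (Var ''x'' Tyo) (Var ''y'' Tyo))"
  have impC: "impC = Lam ''x'' Tyo (Lam ''y'' Tyo E)"
    unfolding impC_def E_def ..
  have wE: "wff \<Sigma> (Lam ''x'' Tyo (Lam ''y'' Tyo E)) (Fun Tyo (Fun Tyo Tyo))"
    "wff \<Sigma> (Lam ''y'' Tyo E) (Fun Tyo Tyo)"
    using wff_impC[of \<Sigma>] by (auto simp: impC wff_def)
  have wxy: "wff \<Sigma> (Var ''x'' Tyo) Tyo" "wff \<Sigma> (Var ''y'' Tyo) Tyo"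
    by (auto simp: wff_def)
  have "val I \<phi> (imp a b) = val I \<phi>' E"
    unfolding imp_def using app_val_Lam[OF wE(1) \<phi> va] app_val_Lam[OF wE(2) \<phi>x vb]
    by (simp add: impC va_def vb_def \<phi>'_def)
  also have "\<dots> = (if va = (if va = tt I \<and> vb = tt I then tt I else ff I) then tt I else ff I)"
    unfolding E_def using val_eqt[OF wxy(1) wff_conj[OF wxy] \<phi>'] val_conj[OF wxy \<phi>']
    by (simp add: \<phi>'_def)
  finally show ?thesis
    using va vb dom_Tyo tt_neq_ff by (auto simp: va_def vb_def)
qed

lemma val_neg:
  assumes "wff \<Sigma> a Tyo" "asg_ok I \<phi>"
  shows "val I \<phi> (neg a) = (if val I \<phi> a = ff I then tt I else ff I)"
  using app_eqval[of "ff I" Tyo "val I \<phi> a"] val_in_dom[OF assms] val_Fa[OF assms(2)] dom_Tyo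
  by (auto simp: neg_def)

lemma val_neq: "wff \<Sigma> a T \<Longrightarrow> wff \<Sigma> b T \<Longrightarrow> asg_ok I \<phi> \<Longrightarrow>
    val I \<phi> (neq T a b) = (if val I \<phi> a \<noteq> val I \<phi> b then tt I else ff I)"
  unfolding neq_def using val_neg val_eqt wff_eqt tt_neq_ff by auto

lemma val_repl:
  assumes "repl a b c c'" "type_of a = type_of b"
    and "\<And>\<psi>. asg_ok I \<psi> \<Longrightarrow> val I \<psi> a = val I \<psi> b" and "asg_ok I \<phi>"
  shows "val I \<phi> c' = val I \<phi> c"
  using assms
proof (induction arbitrary: \<phi> rule: repl.induct)
  case (lam a b s s' x T)
  have "val I (\<phi>((x, T) := d)) s' = val I (\<phi>((x, T) := d)) s" if "d \<in> dom I T" for d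
    using lam.IH[OF lam.prems(1,2) asg_ok_upd[OF lam.prems(3) that]] .
  moreover have "type_of s' = type_of s"
    using repl_type[OF lam.hyps lam.prems(1)] .
  ultimately show ?case
    unfolding val.simps(5) by (metis (no_types, lifting))
qed simp_all

subsection \<open>Soundness\<close>

definition valid :: "tm \<Rightarrow> bool" where
  "valid t \<longleftrightarrow> wff \<Sigma> t Tyo \<and> (\<forall>\<phi>. asg_ok I \<phi> \<longrightarrow> val I \<phi> t = tt I)"

lemma valid_eqtI:
  "wff \<Sigma> a T \<Longrightarrow> wff \<Sigma> b T \<Longrightarrow> (\<And>\<phi>. asg_ok I \<phi> \<Longrightarrow> val I \<phi> a = val I \<phi> b) \<Longrightarrow>
    valid (eqt T a b)"
  by (simp add: valid_def wff_eqt val_eqt)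

lemma valid_ax1:
  "valid (eqt Tyo (conj (App (Var ''g'' (Fun Tyo Tyo)) Tr) (App (Var ''g'' (Fun Tyo Tyo)) Fa))
     (All ''x'' Tyo (App (Var ''g'' (Fun Tyo Tyo)) (Var ''x'' Tyo))))"
proof -
  let ?g = "Var ''g'' (Fun Tyo Tyo)"
  have w: "wff \<Sigma> (App ?g Tr) Tyo" "wff \<Sigma> (App ?g Fa) Tyo" "wff \<Sigma> (App ?g (Var ''x'' Tyo)) Tyo"
    using wff_Tr[of \<Sigma>] wff_Fa[of \<Sigma>] by (auto simp: wff_def)
  show ?thesis
    using wff_conj[OF w(1,2)] wff_All[OF w(3)]
  proof (rule valid_eqtI)
    fix \<phi> assume \<phi>: "asg_ok I \<phi>"
    show "val I \<phi> (conj (App ?g Tr) (App ?g Fa)) = val I \<phi> (All ''x'' Tyo (App ?g (Var ''x'' Tyo)))"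
      unfolding val_conj[OF w(1,2) \<phi>] val_All[OF w(3) \<phi>]
      using val_Tr[OF \<phi>] val_Fa[OF \<phi>] dom_Tyo by auto
  qed
qed

lemma valid_ax2:
  "valid (imp (eqt A (Var ''x'' A) (Var ''y'' A))
     (eqt Tyo (App (Var ''h'' (Fun A Tyo)) (Var ''x'' A)) (App (Var ''h'' (Fun A Tyo)) (Var ''y'' A))))"
proof -
  let ?x = "Var ''x'' A" and ?y = "Var ''y'' A" and ?h = "Var ''h'' (Fun A Tyo)"
  have w: "wff \<Sigma> ?x A" "wff \<Sigma> ?y A" "wff \<Sigma> (App ?h ?x) Tyo" "wff \<Sigma> (App ?h ?y) Tyo"
    by (auto simp: wff_def)
  then have weq: "wff \<Sigma> (eqt A ?x ?y) Tyo" "wff \<Sigma> (eqt Tyo (App ?h ?x) (App ?h ?y)) Tyo"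
    by (simp_all add: wff_eqt)
  show ?thesis
    unfolding valid_def using wff_imp[OF weq] val_imp[OF weq] val_eqt[OF w(1,2)] val_eqt[OF w(3,4)]
    by auto
qed

lemma valid_ax3:
  "valid (eqt Tyo (eqt (Fun B A) (Var ''f'' (Fun B A)) (Var ''g'' (Fun B A)))
     (All ''x'' B (eqt A (App (Var ''f'' (Fun B A)) (Var ''x'' B)) (App (Var ''g'' (Fun B A)) (Var ''x'' B)))))"
proof -
  let ?f = "Var ''f'' (Fun B A)" and ?g = "Var ''g'' (Fun B A)" and ?x = "Var ''x'' B"
  have w: "wff \<Sigma> ?f (Fun B A)" "wff \<Sigma> ?g (Fun B A)" "wff \<Sigma> (App ?f ?x) A" "wff \<Sigma> (App ?g ?x) A"
    by (auto simp: wff_def)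
  then have weq: "wff \<Sigma> (eqt (Fun B A) ?f ?g) Tyo" "wff \<Sigma> (eqt A (App ?f ?x) (App ?g ?x)) Tyo"
    by (simp_all add: wff_eqt)
  show ?thesis
    using weq(1) wff_All[OF weq(2)]
  proof (rule valid_eqtI)
    fix \<phi> assume \<phi>: "asg_ok I \<phi>"
    have "\<phi> (''f'', Fun B A) \<in> dom I (Fun B A)" "\<phi> (''g'', Fun B A) \<in> dom I (Fun B A)"
      using \<phi> by (auto simp: asg_ok_def)
    moreover have "val I (\<phi>((''x'', B) := d)) (eqt A (App ?f ?x) (App ?g ?x)) =
        (if app I (\<phi> (''f'', Fun B A)) d = app I (\<phi> (''g'', Fun B A)) d then tt I else ff I)"
      if "d \<in> dom I B" for d
      using val_eqt[OF w(3,4) asg_ok_upd[OF \<phi> that]] by simp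
    ultimately show "val I \<phi> (eqt (Fun B A) ?f ?g) = val I \<phi> (All ''x'' B (eqt A (App ?f ?x) (App ?g ?x)))"
      unfolding val_eqt[OF w(1,2) \<phi>] val_All[OF weq(2) \<phi>]
      using fun_eq_iff_app tt_neq_ff by auto
  qed
qed

lemma valid_ax4_1:
  assumes a: "wff \<Sigma> a A" and y: "wff \<Sigma> y B"
    and "(\<exists>z. y = Var z B \<and> (z, B) \<noteq> (x, A)) \<or> (\<exists>c. y = Con c B) \<or> (\<exists>C. y = Q C)"
  shows "valid (eqt B (App (Lam x A y) a) y)"
proof -
  have wL: "wff \<Sigma> (Lam x A y) (Fun A B)"
    using y by (simp add: wff_def)
  show ?thesis
  proof (rule valid_eqtI)
    show "wff \<Sigma> (App (Lam x A y) a) B"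
      using a y by (simp add: wff_def)
    fix \<phi> assume "asg_ok I \<phi>"
    then show "val I \<phi> (App (Lam x A y) a) = val I \<phi> y"
      using app_val_Lam[OF wL] val_in_dom[OF a] assms(3) by auto
  qed (rule y)
qed

lemma valid_ax4_2:
  assumes a: "wff \<Sigma> a A"
  shows "valid (eqt A (App (Lam x A (Var x A)) a) a)"
proof (rule valid_eqtI)
  have wL: "wff \<Sigma> (Lam x A (Var x A)) (Fun A A)"
    by (simp add: wff_def)
  show "wff \<Sigma> (App (Lam x A (Var x A)) a) A"
    using a by (simp add: wff_def)
  fix \<phi> assume "asg_ok I \<phi>"
  then show "val I \<phi> (App (Lam x A (Var x A)) a) = val I \<phi> a"
    using app_val_Lam[OF wL] val_in_dom[OF a] by simp
qed (rule a)

lemma valid_ax4_3: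
  assumes a: "wff \<Sigma> a A" and b: "wff \<Sigma> b (Fun C D)" and c: "wff \<Sigma> c C"
  shows "valid (eqt D (App (Lam x A (App b c)) a) (App (App (Lam x A b) a) (App (Lam x A c) a)))"
proof (rule valid_eqtI)
  have wL: "wff \<Sigma> (Lam x A (App b c)) (Fun A D)" "wff \<Sigma> (Lam x A b) (Fun A (Fun C D))"
    "wff \<Sigma> (Lam x A c) (Fun A C)"
    using b c by (auto simp: wff_def)
  then show "wff \<Sigma> (App (Lam x A (App b c)) a) D"
    "wff \<Sigma> (App (App (Lam x A b) a) (App (Lam x A c) a)) D"
    using a by (auto simp: wff_def)
  fix \<phi> assume "asg_ok I \<phi>"
  then show "val I \<phi> (App (Lam x A (App b c)) a) = val I \<phi> (App (App (Lam x A b) a) (App (Lam x A c) a))"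
    using app_val_Lam[OF wL(1)] app_val_Lam[OF wL(2)] app_val_Lam[OF wL(3)] val_in_dom[OF a] by simp
qed

lemma valid_ax4_4:
  assumes a: "wff \<Sigma> a A" and b: "wff \<Sigma> b D" and yx: "(y, C) \<noteq> (x, A)"
    and y_fresh: "(y, C) \<notin> frees a"
  shows "valid (eqt (Fun C D) (App (Lam x A (Lam y C b)) a) (Lam y C (App (Lam x A b) a)))"
proof (rule valid_eqtI)
  have wL: "wff \<Sigma> (Lam x A (Lam y C b)) (Fun A (Fun C D))" "wff \<Sigma> (Lam y C b) (Fun C D)"
    "wff \<Sigma> (Lam x A b) (Fun A D)" "wff \<Sigma> (Lam y C (App (Lam x A b) a)) (Fun C D)"
    using a b by (auto simp: wff_def)
  then show "wff \<Sigma> (App (Lam x A (Lam y C b)) a) (Fun C D)"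
    using a by (simp add: wff_def)
  show "wff \<Sigma> (Lam y C (App (Lam x A b) a)) (Fun C D)"
    by (rule wL(4))
  fix \<phi> assume \<phi>: "asg_ok I \<phi>"
  define \<phi>a where "\<phi>a = \<phi>((x, A) := val I \<phi> a)"
  have va: "val I \<phi> a \<in> dom I A"
    using val_in_dom[OF a \<phi>] .
  have \<phi>a: "asg_ok I \<phi>a"
    unfolding \<phi>a_def using asg_ok_upd[OF \<phi> va] .
  have "app I (val I \<phi>a (Lam y C b)) e = app I (val I \<phi> (Lam y C (App (Lam x A b) a))) e"
    if e: "e \<in> dom I C" for e
  proof -
    have \<phi>e: "asg_ok I (\<phi>((y, C) := e))"
      using asg_ok_upd[OF \<phi> e] .
    have a_e: "val I (\<phi>((y, C) := e)) a = val I \<phi> a"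
      using y_fresh by (intro val_cong) auto
    have "app I (val I \<phi>a (Lam y C b)) e = val I (\<phi>a((y, C) := e)) b"
      using app_val_Lam[OF wL(2) \<phi>a e] .
    also have "\<phi>a((y, C) := e) = \<phi>((y, C) := e, (x, A) := val I (\<phi>((y, C) := e)) a)"
      unfolding \<phi>a_def a_e using fun_upd_twist yx by metis
    also have "val I \<dots> b = val I (\<phi>((y, C) := e)) (App (Lam x A b) a)"
      using app_val_Lam[OF wL(3) \<phi>e] val_in_dom[OF a \<phi>e] by simp
    also have "\<dots> = app I (val I \<phi> (Lam y C (App (Lam x A b) a))) e"
      using app_val_Lam[OF wL(4) \<phi> e] by simp
    finally show ?thesis .
  qed
  then have "val I \<phi>a (Lam y C b) = val I \<phi> (Lam y C (App (Lam x A b) a))"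
    using fun_eq_iff_app[OF val_in_dom[OF wL(2) \<phi>a] val_in_dom[OF wL(4) \<phi>]] by blast
  then show "val I \<phi> (App (Lam x A (Lam y C b)) a) = val I \<phi> (Lam y C (App (Lam x A b) a))"
    using app_val_Lam[OF wL(1) \<phi> va] by (simp add: \<phi>a_def)
qed

lemma valid_ax4_5:
  assumes a: "wff \<Sigma> a A" and b: "wff \<Sigma> b D"
  shows "valid (eqt (Fun A D) (App (Lam x A (Lam x A b)) a) (Lam x A b))"
proof (rule valid_eqtI)
  have wL: "wff \<Sigma> (Lam x A (Lam x A b)) (Fun A (Fun A D))" "wff \<Sigma> (Lam x A b) (Fun A D)"
    using b by (auto simp: wff_def)
  then show "wff \<Sigma> (App (Lam x A (Lam x A b)) a) (Fun A D)"
    using a by (simp add: wff_def)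
  show "wff \<Sigma> (Lam x A b) (Fun A D)"
    by (rule wL(2))
  fix \<phi> assume \<phi>: "asg_ok I \<phi>"
  define \<phi>a where "\<phi>a = \<phi>((x, A) := val I \<phi> a)"
  have va: "val I \<phi> a \<in> dom I A"
    using val_in_dom[OF a \<phi>] .
  have \<phi>a: "asg_ok I \<phi>a"
    unfolding \<phi>a_def using asg_ok_upd[OF \<phi> va] .
  have "val I \<phi>a (Lam x A b) = val I \<phi> (Lam x A b)"
    using fun_eq_iff_app[OF val_in_dom[OF wL(2) \<phi>a] val_in_dom[OF wL(2) \<phi>]]
      app_val_Lam[OF wL(2) \<phi>a] app_val_Lam[OF wL(2) \<phi>] by (simp add: \<phi>a_def)
  then show "val I \<phi> (App (Lam x A (Lam x A b)) a) = val I \<phi> (Lam x A b)"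
    using app_val_Lam[OF wL(1) \<phi> va] by (simp add: \<phi>a_def)
qed

lemma valid_ruleR:
  assumes c: "valid c" and ab: "valid (eqt A a b)" and "repl a b c c'"
  shows "valid c'"
proof -
  have wab: "wff \<Sigma> a A" "wff \<Sigma> b A"
    using ab by (simp_all add: valid_def wff_eqt)
  have "val I \<psi> a = val I \<psi> b" if "asg_ok I \<psi>" for \<psi>
    using ab that val_eqt[OF wab that] tt_neq_ff by (auto simp: valid_def split: if_splits)
  moreover have "type_of a = type_of b"
    using wab by (simp add: wff_def)
  moreover have "wff \<Sigma> c' Tyo"
    using c repl_type[OF \<open>repl a b c c'\<close>] repl_consts[OF \<open>repl a b c c'\<close>] wab(2) \<open>type_of a = type_of b\<close>
    by (auto simp: valid_def wff_def)
  ultimately show ?thesis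
    using c val_repl[OF \<open>repl a b c c'\<close>] by (simp add: valid_def)
qed

theorem derivable_valid:
  assumes "derivable \<Sigma> S t" and "\<forall>a\<in>S. valid a"
  shows "valid t"
  using assms
  by (induction rule: derivable.induct)
    (auto intro: valid_ax1 valid_ax2 valid_ax3 valid_ax4_1 valid_ax4_2 valid_ax4_3 valid_ax4_4
      valid_ax4_5 valid_ruleR)

lemma V_eq_val: "closed t \<Longrightarrow> V t I = val I \<phi> t"
  unfolding V_def closed_def by (rule val_cong) simp

lemma valid_true_sentence: "sentence \<Sigma> a \<Longrightarrow> V a I = tt I \<Longrightarrow> valid a"
  unfolding valid_def sentence_def closed_term_def using V_eq_val by metis

end

theorem mainTheorem18:
  fixes \<Sigma> :: "(string \<times> ty) set" and S :: "tm set" and I :: "'u interp"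
  assumes "\<forall>a\<in>S. sentence \<Sigma> a"
    and "ext_complete \<Sigma> S"
    and "is_model \<Sigma> I S"
  shows "separating \<Sigma> I"
  unfolding separating_def
proof (intro allI impI)
  interpret henkin \<Sigma> I
    using assms(3) by unfold_locales (simp add: is_model_def)
  define \<phi> :: "string \<times> ty \<Rightarrow> 'u" where "\<phi> = (\<lambda>(x, T). SOME d. d \<in> dom I T)"
  have \<phi>: "asg_ok I \<phi>" and V: "\<And>u. V u I = val I \<phi> u"
    using asg_ok_default by (simp_all add: \<phi>_def V_def)
  fix A B r s
  assume rs: "closed_term \<Sigma> r (Fun A B) \<and> closed_term \<Sigma> s (Fun A B) \<and> V r I \<noteq> V s I"
  then obtain t where t: "closed_term \<Sigma> t A"
    and deriv: "derivable \<Sigma> S (imp (neq (Fun A B) r s) (neq B (App r t) (App s t)))"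
    using assms(2) unfolding ext_complete_def by blast
  have w: "wff \<Sigma> r (Fun A B)" "wff \<Sigma> s (Fun A B)" "wff \<Sigma> (App r t) B" "wff \<Sigma> (App s t) B"
    using rs t by (auto simp: closed_term_def wff_def)
  have "\<forall>a\<in>S. valid a"
    using assms(1,3) valid_true_sentence by (simp add: is_model_def)
  then have "valid (imp (neq (Fun A B) r s) (neq B (App r t) (App s t)))"
    by (rule derivable_valid[OF deriv])
  then have "val I \<phi> (neq (Fun A B) r s) = tt I \<longrightarrow> val I \<phi> (neq B (App r t) (App s t)) = tt I"
    using val_imp[OF wff_neq[OF w(1,2)] wff_neq[OF w(3,4)] \<phi>] \<phi> tt_neq_ff
    by (auto simp: valid_def split: if_splits)
  moreover have "val I \<phi> (neq (Fun A B) r s) = tt I"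
    using rs val_neq[OF w(1,2) \<phi>] by (simp add: V)
  ultimately have "val I \<phi> (neq B (App r t) (App s t)) = tt I"
    by blast
  then have "V (App r t) I \<noteq> V (App s t) I"
    unfolding V val_neq[OF w(3,4) \<phi>] using tt_neq_ff by (simp split: if_splits)
  then show "\<exists>t. closed_term \<Sigma> t A \<and> V (App r t) I \<noteq> V (App s t) I"
    using t by blast
qed

end
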